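(* If an atomic flow $A$ is normal for $\mathsf c$ and $A\to_{\mathsf w}^\star B$, then $B$ is normal for $\mathsf c$.
   Context: An atomic flow is a tuple $(V,E,\eta,up,lo)$: finite sets of vertices and edges, a labelling of vertices by interaction, cut, weakening, coweakening, contraction or cocontraction, and maps $up:E\to V\cup\{\top\}$, $lo:E\to V\cup\{\bot\}$. Upper edges of $\nu$: $lo(\epsilon)=\nu$; lower edges: $up(\epsilon)=\nu$. (Upper, lower) edge numbers: $(0,2)$ interaction, $(2,0)$ cut, $(0,1)$ weakening, $(1,0)$ coweakening, $(2,1)$ contraction, $(1,2)$ cocontraction; no directed cycles; there is $\pi:E\to\{+,-\}$ giving all edges of a (co)contraction the same sign and the two edges of an interaction/cut different signs. A flow is normal for $\mathsf c$ if none of the following patterns occurs in it: a contraction whose lower edge is an upper edge of a cut; an interaction one of whose lower edges is the upper edge of a cocontraction; a contraction whose lower edge is the upper edge of a cocontraction. $\to_{\mathsf w}^\star$ is the reflexive-transitive closure of $\to_{\mathsf w}$, where $A\to_{\mathsf w}B$ means $B$ results from $A$ by one of these subgraph replacements: (i) a weakening whose lower edge is an upper edge of a contraction: delete both, merging the contraction's other upper edge and its lower edge into one edge; (ii) a coweakening whose upper edge is a lower edge of a cocontraction: delete both, merging the cocontraction's upper edge and other lower edge; (iii) a weakening whose lower edge is an upper edge of a cut: delete both, the cut's other upper edge becoming the upper edge of a new coweakening; (iv) an interaction one of whose lower edges is the upper edge of a coweakening: delete both, the other lower edge becoming the lower edge of a new weakening; (v) an edge from a weakening to a coweakening: delete it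 and both vertices; (vi) a weakening whose lower edge is the upper edge of a cocontraction: replace by two new weakenings whose lower edges are the cocontraction's lower edges; (vii) a coweakening whose upper edge is the lower edge of a contraction: replace by two new coweakenings whose upper edges are the contraction's upper edges. *)

theory Defs
  imports Main
begin

text \<open>Atomic flows. Vertices have type 'v, edges type 'e. The value None of
  up stands for the top end, None of lo for the bottom end.\<close>

datatype vkind = KInter | KCut | KWeak | KCoweak | KContr | KCocontr

record ('v, 'e) flow =
  fverts :: "'v set"
  fedges :: "'e set"
  flab :: "'v \<Rightarrow> vkind"
  fup :: "'e \<Rightarrow> 'v option"
  flo :: "'e \<Rightarrow> 'v option"

definition upper_edges :: "('v, 'e) flow \<Rightarrow> 'v \<Rightarrow> 'e set" where
  "upper_edges F v = {e \<in> fedges F. flo F e = Some v}"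

definition lower_edges :: "('v, 'e) flow \<Rightarrow> 'v \<Rightarrow> 'e set" where
  "lower_edges F v = {e \<in> fedges F. fup F e = Some v}"

fun n_upper :: "vkind \<Rightarrow> nat" where
  "n_upper KInter = 0" | "n_upper KCut = 2" | "n_upper KWeak = 0"
| "n_upper KCoweak = 1" | "n_upper KContr = 2" | "n_upper KCocontr = 1"

fun n_lower :: "vkind \<Rightarrow> nat" where
  "n_lower KInter = 2" | "n_lower KCut = 0" | "n_lower KWeak = 1"
| "n_lower KCoweak = 0" | "n_lower KContr = 1" | "n_lower KCocontr = 2"

definition atomic_flow :: "('v, 'e) flow \<Rightarrow> bool" where
  "atomic_flow F \<longleftrightarrow>
     finite (fverts F) \<and> finite (fedges F) \<and>
     (\<forall>e \<in> fedges F. (\<forall>v. fup F e = Some v \<longrightarrow> v \<in> fverts F)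
                    \<and> (\<forall>v. flo F e = Some v \<longrightarrow> v \<in> fverts F)) \<and>
     (\<forall>v \<in> fverts F. card (upper_edges F v) = n_upper (flab F v)
                    \<and> card (lower_edges F v) = n_lower (flab F v)) \<and>
     acyclic {(u, v). \<exists>e \<in> fedges F. fup F e = Some u \<and> flo F e = Some v} \<and>
     (\<exists>pol :: 'e \<Rightarrow> bool.
        (\<forall>v \<in> fverts F. flab F v \<in> {KContr, KCocontr} \<longrightarrow>
           (\<forall>e1 \<in> upper_edges F v \<union> lower_edges F v.
              \<forall>e2 \<in> upper_edges F v \<union> lower_edges F v. pol e1 = pol e2)) \<and>
        (\<forall>v \<in> fverts F. flab F v = KInter \<longrightarrow>
           (\<forall>e1 \<in> lower_edges F v. \<forall>e2 \<in> lower_edges F v. e1 \<noteq> e2 \<longrightarrow> pol e1 \<noteq> pol e2)) \<and>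
        (\<forall>v \<in> fverts F. flab F v = KCut \<longrightarrow>
           (\<forall>e1 \<in> upper_edges F v. \<forall>e2 \<in> upper_edges F v. e1 \<noteq> e2 \<longrightarrow> pol e1 \<noteq> pol e2)))"

definition has_link :: "('v, 'e) flow \<Rightarrow> vkind \<Rightarrow> vkind \<Rightarrow> bool" where
  "has_link F a b \<longleftrightarrow> (\<exists>e \<in> fedges F. \<exists>u \<in> fverts F. \<exists>v \<in> fverts F.
      fup F e = Some u \<and> flo F e = Some v \<and> flab F u = a \<and> flab F v = b)"

definition normal_c :: "('v, 'e) flow \<Rightarrow> bool" where
  "normal_c F \<longleftrightarrow> \<not> has_link F KContr KCut \<and> \<not> has_link F KInter KCocontr
                  \<and> \<not> has_link F KContr KCocontr"

text \<open>One weakening-reduction step. Merged edges keep the name of one of the two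
  edges; new vertices are fresh names (not in the vertex set).\<close>
definition wstep :: "('v, 'e) flow \<Rightarrow> ('v, 'e) flow \<Rightarrow> bool" where
  "wstep F G \<longleftrightarrow>
   \<comment> \<open>(i) weakening into contraction\<close>
   (\<exists>w c e e' f. w \<in> fverts F \<and> c \<in> fverts F \<and> flab F w = KWeak \<and> flab F c = KContr \<and>
      e \<in> fedges F \<and> fup F e = Some w \<and> flo F e = Some c \<and>
      e' \<in> upper_edges F c \<and> e' \<noteq> e \<and> f \<in> lower_edges F c \<and>
      G = F\<lparr>fverts := fverts F - {w, c}, fedges := fedges F - {e, f},
            flo := (flo F)(e' := flo F f)\<rparr>)
 \<or> \<comment> \<open>(ii) cocontraction into coweakening\<close>
   (\<exists>cw k e e' g. cw \<in> fverts F \<and> k \<in> fverts F \<and> flab F cw = KCoweak \<and> flab F k = KCocontr \<and>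
      e \<in> fedges F \<and> flo F e = Some cw \<and> fup F e = Some k \<and>
      e' \<in> lower_edges F k \<and> e' \<noteq> e \<and> g \<in> upper_edges F k \<and>
      G = F\<lparr>fverts := fverts F - {cw, k}, fedges := fedges F - {e, g},
            fup := (fup F)(e' := fup F g)\<rparr>)
 \<or> \<comment> \<open>(iii) weakening into cut\<close>
   (\<exists>w c e e' n. w \<in> fverts F \<and> c \<in> fverts F \<and> flab F w = KWeak \<and> flab F c = KCut \<and>
      e \<in> fedges F \<and> fup F e = Some w \<and> flo F e = Some c \<and>
      e' \<in> upper_edges F c \<and> e' \<noteq> e \<and> n \<notin> fverts F \<and>
      G = F\<lparr>fverts := insert n (fverts F - {w, c}), fedges := fedges F - {e},
            flab := (flab F)(n := KCoweak), flo := (flo F)(e' := Some n)\<rparr>)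
 \<or> \<comment> \<open>(iv) interaction into coweakening\<close>
   (\<exists>i cw e e' n. i \<in> fverts F \<and> cw \<in> fverts F \<and> flab F i = KInter \<and> flab F cw = KCoweak \<and>
      e \<in> fedges F \<and> fup F e = Some i \<and> flo F e = Some cw \<and>
      e' \<in> lower_edges F i \<and> e' \<noteq> e \<and> n \<notin> fverts F \<and>
      G = F\<lparr>fverts := insert n (fverts F - {i, cw}), fedges := fedges F - {e},
            flab := (flab F)(n := KWeak), fup := (fup F)(e' := Some n)\<rparr>)
 \<or> \<comment> \<open>(v) weakening into coweakening\<close>
   (\<exists>w cw e. w \<in> fverts F \<and> cw \<in> fverts F \<and> flab F w = KWeak \<and> flab F cw = KCoweak \<and>
      e \<in> fedges F \<and> fup F e = Some w \<and> flo F e = Some cw \<and>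
      G = F\<lparr>fverts := fverts F - {w, cw}, fedges := fedges F - {e}\<rparr>)
 \<or> \<comment> \<open>(vi) weakening into cocontraction\<close>
   (\<exists>w k e f1 f2 n1 n2. w \<in> fverts F \<and> k \<in> fverts F \<and> flab F w = KWeak \<and> flab F k = KCocontr \<and>
      e \<in> fedges F \<and> fup F e = Some w \<and> flo F e = Some k \<and>
      f1 \<in> lower_edges F k \<and> f2 \<in> lower_edges F k \<and> f1 \<noteq> f2 \<and>
      n1 \<notin> fverts F \<and> n2 \<notin> fverts F \<and> n1 \<noteq> n2 \<and>
      G = F\<lparr>fverts := insert n1 (insert n2 (fverts F - {w, k})), fedges := fedges F - {e},
            flab := (flab F)(n1 := KWeak, n2 := KWeak),
            fup := (fup F)(f1 := Some n1, f2 := Some n2)\<rparr>)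
 \<or> \<comment> \<open>(vii) contraction into coweakening\<close>
   (\<exists>cw c e f1 f2 n1 n2. cw \<in> fverts F \<and> c \<in> fverts F \<and> flab F cw = KCoweak \<and> flab F c = KContr \<and>
      e \<in> fedges F \<and> flo F e = Some cw \<and> fup F e = Some c \<and>
      f1 \<in> upper_edges F c \<and> f2 \<in> upper_edges F c \<and> f1 \<noteq> f2 \<and>
      n1 \<notin> fverts F \<and> n2 \<notin> fverts F \<and> n1 \<noteq> n2 \<and>
      G = F\<lparr>fverts := insert n1 (insert n2 (fverts F - {cw, c})), fedges := fedges F - {e},
            flab := (flab F)(n1 := KCoweak, n2 := KCoweak),
            flo := (flo F)(f1 := Some n1, f2 := Some n2)\<rparr>)"

end

theory Submission
  imports Defs
begin

text \<open>Weakening reduction can only create new links by bypassing a contraction from below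
  (rule i) or a cocontraction from above (rule ii); in both cases the bypassed vertex already witnesses a redex in the old flow, so
  normality is preserved.\<close>

definition c_redex :: "vkind \<Rightarrow> vkind \<Rightarrow> bool" where
  "c_redex a b \<longleftrightarrow> (a = KContr \<and> b = KCut) \<or> (a = KInter \<and> b = KCocontr) \<or> (a = KContr \<and> b = KCocontr)"

lemma normal_c_iff_no_c_redex: "normal_c F \<longleftrightarrow> \<not> (\<exists>a b. c_redex a b \<and> has_link F a b)"
  unfolding normal_c_def c_redex_def by auto

lemma c_redex_weak_free: "c_redex a b \<Longrightarrow> a \<notin> {KWeak, KCoweak} \<and> b \<notin> {KWeak, KCoweak}"
  unfolding c_redex_def by auto

lemma c_redex_from_contr: "c_redex a b \<Longrightarrow> c_redex KContr b"
  unfolding c_redex_def by auto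

lemma c_redex_into_cocontr: "c_redex a b \<Longrightarrow> c_redex a KCocontr"
  unfolding c_redex_def by auto

lemma has_linkI:
  "e \<in> fedges F \<Longrightarrow> u \<in> fverts F \<Longrightarrow> v \<in> fverts F \<Longrightarrow> fup F e = Some u \<Longrightarrow> flo F e = Some v
    \<Longrightarrow> has_link F (flab F u) (flab F v)"
  unfolding has_link_def by blast

lemma wstep_reflects_c_redex:
  assumes "wstep F G" and "c_redex a b" and "has_link G a b"
  shows "\<exists>a' b'. c_redex a' b' \<and> has_link F a' b'"
proof -
  obtain x u v where x: "x \<in> fedges G" and u: "u \<in> fverts G" and v: "v \<in> fverts G"
    and xu: "fup G x = Some u" and xv: "flo G x = Some v"
    and ab: "flab G u = a" "flab G v = b"
    using assms(3) unfolding has_link_def by blast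
  have "has_link F a b \<or> has_link F KContr b \<or> has_link F a KCocontr"
    using assms(1) unfolding wstep_def
  proof (elim disjE exE conjE)
    fix w c e e' f
    assume "w \<in> fverts F" "c \<in> fverts F" "flab F c = KContr" "e' \<noteq> e" "f \<in> lower_edges F c"
      "G = F\<lparr>fverts := fverts F - {w, c}, fedges := fedges F - {e, f}, flo := (flo F)(e' := flo F f)\<rparr>"
    then show ?thesis
      using x u v xu xv ab has_linkI[of f F c v] unfolding lower_edges_def
      by (cases "x = e'") (auto intro: has_linkI)
  next
    fix cw k e e' g
    assume "cw \<in> fverts F" "k \<in> fverts F" "flab F k = KCocontr" "e' \<noteq> e" "g \<in> upper_edges F k"
      "G = F\<lparr>fverts := fverts F - {cw, k}, fedges := fedges F - {e, g}, fup := (fup F)(e' := fup F g)\<rparr>"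
    then show ?thesis
      using x u v xu xv ab has_linkI[of g F u k] unfolding upper_edges_def
      by (cases "x = e'") (auto intro: has_linkI)
  \<comment> \<open>Rules (iii)--(vii) keep the endpoints of every surviving edge or attach it to a fresh
     (co)weakening, which cannot take part in a redex.\<close>
  qed (rule disjI1, use x u v xu xv ab c_redex_weak_free[OF assms(2)] in
        \<open>auto split: if_splits intro: has_linkI\<close>)+
  then show ?thesis
    using assms(2) c_redex_from_contr c_redex_into_cocontr by blast
qed

lemma wstep_preserves_normal_c: "wstep F G \<Longrightarrow> normal_c F \<Longrightarrow> normal_c G"
  using wstep_reflects_c_redex unfolding normal_c_iff_no_c_redex by blast

theorem proposition4p19:
  fixes A B :: "('v, 'e) flow"
  assumes "atomic_flow A" and "normal_c A" and "wstep\<^sup>*\<^sup>* A B"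
  shows "normal_c B"
  using assms(3,2) by (induction rule: rtranclp_induct) (auto intro: wstep_preserves_normal_c)

end
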